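(* Let $S$ be a multiplicative subset of $R$ and $M=R_S$, regarded as an $R$-module. The following are equivalent: (i) $M$ is prime as an $R$-module; (ii) $\mathrm{Ann}_R(M)$ is a prime ideal of $R$; (iii) $R_S$ is an integral domain; (iv) there exists $\mathfrak p\in\mathrm{Spec}(R)$ with $M\ne 0$ and a monomorphism of $R$-modules $M\hookrightarrow\kappa(\mathfrak p)=R_{\mathfrak p}/\mathfrak pR_{\mathfrak p}$.
   Context: $R$ is a commutative Noetherian local ring. A module $M\neq0$ is prime if every $r\in R$ acts on $M$ either as zero or injectively. *)

theory Defs
  imports Main
begin

definition is_ideal :: "'a::comm_ring_1 set \<Rightarrow> bool" where
  "is_ideal I \<longleftrightarrow> 0 \<in> I \<and> (\<forall>x\<in>I. \<forall>y\<in>I. x + y \<in> I) \<and> (\<forall>r. \<forall>x\<in>I. r * x \<in> I)"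

definition prime_ideal :: "'a::comm_ring_1 set \<Rightarrow> bool" where
  "prime_ideal P \<longleftrightarrow> is_ideal P \<and> P \<noteq> UNIV \<and> (\<forall>a b. a * b \<in> P \<longrightarrow> a \<in> P \<or> b \<in> P)"

definition maximal_ideal :: "'a::comm_ring_1 set \<Rightarrow> bool" where
  "maximal_ideal m \<longleftrightarrow> is_ideal m \<and> m \<noteq> UNIV \<and>
     (\<forall>J. is_ideal J \<and> m \<subseteq> J \<longrightarrow> J = m \<or> J = UNIV)"

definition noetherian_ring :: "'a::comm_ring_1 itself \<Rightarrow> bool" where
  "noetherian_ring _ \<longleftrightarrow> (\<forall>f :: nat \<Rightarrow> 'a set.
      (\<forall>n. is_ideal (f n) \<and> f n \<subseteq> f (Suc n)) \<longrightarrow> (\<exists>N. \<forall>n\<ge>N. f n = f N))"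

definition local_ring :: "'a::comm_ring_1 itself \<Rightarrow> bool" where
  "local_ring _ \<longleftrightarrow> (\<exists>!m :: 'a set. maximal_ideal m)"

definition mult_closed :: "'a::comm_ring_1 set \<Rightarrow> bool" where
  "mult_closed S \<longleftrightarrow> 1 \<in> S \<and> (\<forall>s\<in>S. \<forall>t\<in>S. s * t \<in> S)"

record ('r, 'm) rmod =
  mcarrier :: "'m set"
  mzero :: 'm
  madd :: "'m \<Rightarrow> 'm \<Rightarrow> 'm"
  msmul :: "'r \<Rightarrow> 'm \<Rightarrow> 'm"

definition ann :: "('r, 'm) rmod \<Rightarrow> 'r set" where
  "ann M = {r. \<forall>m\<in>mcarrier M. msmul M r m = mzero M}"

definition prime_module :: "('r, 'm) rmod \<Rightarrow> bool" where
  "prime_module M \<longleftrightarrow> mcarrier M \<noteq> {mzero M} \<and>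
     (\<forall>r. (\<forall>m\<in>mcarrier M. msmul M r m = mzero M) \<or> inj_on (msmul M r) (mcarrier M))"

definition mod_hom :: "('r, 'm) rmod \<Rightarrow> ('r, 'n) rmod \<Rightarrow> ('m \<Rightarrow> 'n) \<Rightarrow> bool" where
  "mod_hom M N f \<longleftrightarrow> (\<forall>x\<in>mcarrier M. f x \<in> mcarrier N) \<and>
     (\<forall>x\<in>mcarrier M. \<forall>y\<in>mcarrier M. f (madd M x y) = madd N (f x) (f y)) \<and>
     (\<forall>r. \<forall>x\<in>mcarrier M. f (msmul M r x) = msmul N r (f x))"

definition mod_mono :: "('r, 'm) rmod \<Rightarrow> ('r, 'n) rmod \<Rightarrow> ('m \<Rightarrow> 'n) \<Rightarrow> bool" where
  "mod_mono M N f \<longleftrightarrow> mod_hom M N f \<and> inj_on f (mcarrier M)"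

definition coset :: "('r, 'm) rmod \<Rightarrow> 'm set \<Rightarrow> 'm \<Rightarrow> 'm set" where
  "coset M N x = {madd M x n | n. n \<in> N}"

definition quot_mod :: "('r, 'm) rmod \<Rightarrow> 'm set \<Rightarrow> ('r, 'm set) rmod" where
  "quot_mod M N = \<lparr> mcarrier = coset M N ` mcarrier M,
     mzero = coset M N (mzero M),
     madd = (\<lambda>A B. SOME C. \<exists>x\<in>mcarrier M. \<exists>y\<in>mcarrier M.
                 A = coset M N x \<and> B = coset M N y \<and> C = coset M N (madd M x y)),
     msmul = (\<lambda>r A. SOME C. \<exists>x\<in>mcarrier M. A = coset M N x \<and> C = coset M N (msmul M r x)) \<rparr>"

definition loc_rel :: "'a::comm_ring_1 set \<Rightarrow> (('a \<times> 'a) \<times> ('a \<times> 'a)) set" where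
  "loc_rel S = {((r, s), (r', s')). s \<in> S \<and> s' \<in> S \<and> (\<exists>t\<in>S. t * (r * s' - r' * s) = 0)}"

definition frac :: "'a::comm_ring_1 set \<Rightarrow> 'a \<Rightarrow> 'a \<Rightarrow> ('a \<times> 'a) set" where
  "frac S r s = loc_rel S `` {(r, s)}"

definition loc_carrier :: "'a::comm_ring_1 set \<Rightarrow> ('a \<times> 'a) set set" where
  "loc_carrier S = {frac S r s | r s. s \<in> S}"

definition loc_add :: "'a::comm_ring_1 set \<Rightarrow> ('a \<times> 'a) set \<Rightarrow> ('a \<times> 'a) set \<Rightarrow> ('a \<times> 'a) set" where
  "loc_add S X Y = (SOME Z. \<exists>r s r' s'. s \<in> S \<and> s' \<in> S \<and> X = frac S r s \<and> Y = frac S r' s' \<and>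
                       Z = frac S (r * s' + r' * s) (s * s'))"

definition loc_mult :: "'a::comm_ring_1 set \<Rightarrow> ('a \<times> 'a) set \<Rightarrow> ('a \<times> 'a) set \<Rightarrow> ('a \<times> 'a) set" where
  "loc_mult S X Y = (SOME Z. \<exists>r s r' s'. s \<in> S \<and> s' \<in> S \<and> X = frac S r s \<and> Y = frac S r' s' \<and>
                       Z = frac S (r * r') (s * s'))"

definition loc_smul :: "'a::comm_ring_1 set \<Rightarrow> 'a \<Rightarrow> ('a \<times> 'a) set \<Rightarrow> ('a \<times> 'a) set" where
  "loc_smul S a X = (SOME Z. \<exists>r s. s \<in> S \<and> X = frac S r s \<and> Z = frac S (a * r) s)"

definition loc_mod :: "'a::comm_ring_1 set \<Rightarrow> ('a, ('a \<times> 'a) set) rmod" where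
  "loc_mod S = \<lparr> mcarrier = loc_carrier S, mzero = frac S 0 1,
                 madd = loc_add S, msmul = loc_smul S \<rparr>"

definition loc_domain :: "'a::comm_ring_1 set \<Rightarrow> bool" where
  "loc_domain S \<longleftrightarrow> frac S 1 1 \<noteq> frac S 0 1 \<and>
     (\<forall>X\<in>loc_carrier S. \<forall>Y\<in>loc_carrier S.
        loc_mult S X Y = frac S 0 1 \<longrightarrow> X = frac S 0 1 \<or> Y = frac S 0 1)"

definition ext_max :: "'a::comm_ring_1 set \<Rightarrow> ('a \<times> 'a) set set" where
  "ext_max p = {frac (- p) a s | a s. a \<in> p \<and> s \<in> - p}"

definition kappa :: "'a::comm_ring_1 set \<Rightarrow> ('a, ('a \<times> 'a) set set) rmod" where
  "kappa p = quot_mod (loc_mod (- p)) (ext_max p)"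

end

theory Submission
  imports Defs
begin

text \<open>Everything is governed by the kernel K = {r. \<exists>t\<in>S. t * r = 0} of R \<rightarrow> S\<inverse>R,
  which is the annihilator of S\<inverse>R. The module S\<inverse>R is prime exactly when K is a prime
  ideal, and so is the ring S\<inverse>R a domain. If K is prime then S misses K, so a/s \<mapsto> a/s
  defines an embedding of S\<inverse>R into \<kappa>(K). Conversely, \<kappa>(p) is a prime module (elements
  of p act as zero, all others injectively), and a nonzero submodule of a prime module is
  prime.\<close>

lemma mult_closedD:
  assumes "mult_closed S"
  shows mult_closed_one: "1 \<in> S" and mult_closed_mult: "s \<in> S \<Longrightarrow> t \<in> S \<Longrightarrow> s * t \<in> S"
  using assms unfolding mult_closed_def by auto

lemma loc_rel_iff:
  "((a, s), (b, v)) \<in> loc_rel S \<longleftrightarrow> s \<in> S \<and> v \<in> S \<and> (\<exists>t\<in>S. t * (a * v - b * s) = 0)"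
  unfolding loc_rel_def by auto

lemma loc_rel_refl: "mult_closed S \<Longrightarrow> s \<in> S \<Longrightarrow> ((a, s), (a, s)) \<in> loc_rel S"
  unfolding loc_rel_iff using mult_closed_one by fastforce

lemma loc_rel_sym: "((a, s), (b, v)) \<in> loc_rel S \<Longrightarrow> ((b, v), (a, s)) \<in> loc_rel S"
  unfolding loc_rel_iff by (metis minus_diff_eq mult_minus_right neg_equal_0_iff_equal)

lemma loc_rel_trans:
  assumes S: "mult_closed S" and "((a, s), (b, v)) \<in> loc_rel S" "((b, v), (c, w)) \<in> loc_rel S"
  shows "((a, s), (c, w)) \<in> loc_rel S"
proof -
  from assms obtain t t' where t: "t \<in> S" "t * (a * v - b * s) = 0"
    and t': "t' \<in> S" "t' * (b * w - c * v) = 0" and "s \<in> S" "v \<in> S" "w \<in> S"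
    unfolding loc_rel_iff by auto
  moreover have "(t * t' * v) * (a * w - c * s) = t' * w * (t * (a * v - b * s)) + t * s * (t' * (b * w - c * v))"
    by (simp add: algebra_simps)
  ultimately show ?thesis
    unfolding loc_rel_iff using mult_closed_mult[OF S] by (metis add.right_neutral mult_zero_right)
qed

lemma frac_eq_iff:
  assumes S: "mult_closed S" and "s \<in> S" "v \<in> S"
  shows "frac S a s = frac S b v \<longleftrightarrow> (\<exists>t\<in>S. t * (a * v - b * s) = 0)"
proof
  assume "frac S a s = frac S b v"
  then have "(b, v) \<in> frac S a s"
    using loc_rel_refl[OF S \<open>v \<in> S\<close>] unfolding frac_def by auto
  then show "\<exists>t\<in>S. t * (a * v - b * s) = 0"
    unfolding frac_def by (auto simp: loc_rel_iff)
next
  assume "\<exists>t\<in>S. t * (a * v - b * s) = 0"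
  then have rel: "((a, s), (b, v)) \<in> loc_rel S"
    unfolding loc_rel_iff using assms by auto
  show "frac S a s = frac S b v"
    unfolding frac_def
    using loc_rel_trans[OF S rel] loc_rel_trans[OF S loc_rel_sym[OF rel]] by auto
qed

lemma loc_carrier_iff: "X \<in> loc_carrier S \<longleftrightarrow> (\<exists>a s. s \<in> S \<and> X = frac S a s)"
  unfolding loc_carrier_def by blast

lemma frac_in_loc_carrier: "s \<in> S \<Longrightarrow> frac S a s \<in> loc_carrier S"
  unfolding loc_carrier_iff by blast

lemma frac_add_cong:
  assumes S: "mult_closed S" and "s \<in> S" "v \<in> S" "s' \<in> S" "v' \<in> S"
    and "frac S a s = frac S a' s'" "frac S b v = frac S b' v'"
  shows "frac S (a * v + b * s) (s * v) = frac S (a' * v' + b' * s') (s' * v')"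
proof -
  from assms obtain t u where t: "t \<in> S" "t * (a * s' - a' * s) = 0"
    and u: "u \<in> S" "u * (b * v' - b' * v) = 0"
    by (auto simp: frac_eq_iff)
  have "(t * u) * ((a * v + b * s) * (s' * v') - (a' * v' + b' * s') * (s * v))
      = (t * (a * s' - a' * s)) * (u * v * v') + (u * (b * v' - b' * v)) * (t * s * s')"
    by (simp add: algebra_simps)
  also have "\<dots> = 0"
    using t u by simp
  finally show ?thesis
    using assms t u mult_closed_mult[OF S] by (subst frac_eq_iff) auto
qed

lemma frac_mult_cong:
  assumes S: "mult_closed S" and "s \<in> S" "v \<in> S" "s' \<in> S" "v' \<in> S"
    and "frac S a s = frac S a' s'" "frac S b v = frac S b' v'"
  shows "frac S (a * b) (s * v) = frac S (a' * b') (s' * v')"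
proof -
  from assms obtain t u where t: "t \<in> S" "t * (a * s' - a' * s) = 0"
    and u: "u \<in> S" "u * (b * v' - b' * v) = 0"
    by (auto simp: frac_eq_iff)
  have "(t * u) * ((a * b) * (s' * v') - (a' * b') * (s * v))
      = (t * (a * s' - a' * s)) * (u * b * v') + (u * (b * v' - b' * v)) * (t * a' * s)"
    by (simp add: algebra_simps)
  also have "\<dots> = 0"
    using t u by simp
  finally show ?thesis
    using assms t u mult_closed_mult[OF S] by (subst frac_eq_iff) auto
qed

lemma frac_smul_cong:
  assumes S: "mult_closed S" and "s \<in> S" "s' \<in> S" "frac S a s = frac S a' s'"
  shows "frac S (c * a) s = frac S (c * a') s'"
proof -
  from assms obtain t where t: "t \<in> S" "t * (a * s' - a' * s) = 0"
    by (auto simp: frac_eq_iff)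
  have "t * (c * a * s' - c * a' * s) = c * (t * (a * s' - a' * s))"
    by (simp add: algebra_simps)
  then show ?thesis
    using assms t by (auto simp: frac_eq_iff)
qed

lemma loc_add_frac:
  assumes "mult_closed S" "s \<in> S" "v \<in> S"
  shows "loc_add S (frac S a s) (frac S b v) = frac S (a * v + b * s) (s * v)"
  unfolding loc_add_def
  by (rule some_equality) (use assms in \<open>blast, metis frac_add_cong\<close>)

lemma loc_mult_frac:
  assumes "mult_closed S" "s \<in> S" "v \<in> S"
  shows "loc_mult S (frac S a s) (frac S b v) = frac S (a * b) (s * v)"
  unfolding loc_mult_def
  by (rule some_equality) (use assms in \<open>blast, metis frac_mult_cong\<close>)

lemma loc_smul_frac:
  assumes "mult_closed S" "s \<in> S"
  shows "loc_smul S c (frac S a s) = frac S (c * a) s"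
  unfolding loc_smul_def
  by (rule some_equality) (use assms in \<open>blast, metis frac_smul_cong\<close>)

lemma loc_smul_closed:
  "mult_closed S \<Longrightarrow> X \<in> loc_carrier S \<Longrightarrow> loc_smul S r X \<in> loc_carrier S"
  unfolding loc_carrier_iff using loc_smul_frac by metis

lemma loc_mod_simps:
  "mcarrier (loc_mod S) = loc_carrier S" "mzero (loc_mod S) = frac S 0 1"
  "madd (loc_mod S) = loc_add S" "msmul (loc_mod S) = loc_smul S"
  by (simp_all add: loc_mod_def)

definition loc_kernel :: "'a::comm_ring_1 set \<Rightarrow> 'a set" where
  "loc_kernel S = {r. \<exists>t\<in>S. t * r = 0}"

lemma frac_eq_iff_loc_kernel:
  assumes "mult_closed S" "s \<in> S" "v \<in> S"
  shows "frac S a s = frac S b v \<longleftrightarrow> a * v - b * s \<in> loc_kernel S"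
  unfolding frac_eq_iff[OF assms] loc_kernel_def by simp

lemma frac_eq_zero_iff:
  assumes "mult_closed S" "s \<in> S"
  shows "frac S a s = frac S 0 1 \<longleftrightarrow> a \<in> loc_kernel S"
  using frac_eq_iff_loc_kernel[OF assms mult_closed_one[OF assms(1)]] by simp

lemma loc_kernel_ideal:
  assumes S: "mult_closed S"
  shows "is_ideal (loc_kernel S)"
  unfolding is_ideal_def
proof (intro conjI ballI allI)
  show "0 \<in> loc_kernel S"
    unfolding loc_kernel_def using mult_closed_one[OF S] by auto
next
  fix x y assume "x \<in> loc_kernel S" "y \<in> loc_kernel S"
  then obtain t u where t: "t \<in> S" "t * x = 0" and u: "u \<in> S" "u * y = 0"
    unfolding loc_kernel_def by blast
  have "(t * u) * (x + y) = u * (t * x) + t * (u * y)"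
    by (simp add: algebra_simps)
  then have "(t * u) * (x + y) = 0"
    using t u by simp
  then show "x + y \<in> loc_kernel S"
    unfolding loc_kernel_def using mult_closed_mult[OF S t(1) u(1)] by blast
next
  fix r x assume "x \<in> loc_kernel S"
  then obtain t where t: "t \<in> S" "t * x = 0"
    unfolding loc_kernel_def by blast
  have "t * (r * x) = r * (t * x)"
    by (simp add: algebra_simps)
  then show "r * x \<in> loc_kernel S"
    unfolding loc_kernel_def using t by auto
qed

lemma ideal_proper_iff:
  assumes "is_ideal I"
  shows "I \<noteq> UNIV \<longleftrightarrow> 1 \<notin> I"
proof -
  have "r \<in> I" if "1 \<in> I" for r
    using assms that unfolding is_ideal_def by (metis mult.right_neutral)
  then show ?thesis
    by auto
qed

lemma prime_idealD:
  assumes "prime_ideal p"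
  shows "0 \<in> p" "x \<in> p \<Longrightarrow> y \<in> p \<Longrightarrow> x + y \<in> p" "x \<in> p \<Longrightarrow> r * x \<in> p"
    "1 \<notin> p" "a * b \<in> p \<Longrightarrow> a \<in> p \<or> b \<in> p"
  using assms ideal_proper_iff[of p] unfolding prime_ideal_def is_ideal_def by auto

lemma prime_loc_kernel_iff:
  assumes "mult_closed S"
  shows "prime_ideal (loc_kernel S) \<longleftrightarrow>
    1 \<notin> loc_kernel S \<and> (\<forall>a b. a * b \<in> loc_kernel S \<longrightarrow> a \<in> loc_kernel S \<or> b \<in> loc_kernel S)"
  unfolding prime_ideal_def using loc_kernel_ideal[OF assms] ideal_proper_iff by blast

lemma loc_carrier_nontrivial_iff:
  assumes S: "mult_closed S"
  shows "loc_carrier S \<noteq> {frac S 0 1} \<longleftrightarrow> 1 \<notin> loc_kernel S"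
proof -
  have 1: "1 \<in> S" using mult_closed_one[OF S] .
  have "loc_carrier S \<noteq> {frac S 0 1}" if "1 \<notin> loc_kernel S"
    using that frac_eq_zero_iff[OF S 1] frac_in_loc_carrier[OF 1, of 1] by auto
  moreover have "loc_carrier S = {frac S 0 1}" if "1 \<in> loc_kernel S"
  proof -
    have "0 \<in> S"
      using that unfolding loc_kernel_def by auto
    then have "a \<in> loc_kernel S" for a
      unfolding loc_kernel_def by force
    then show ?thesis
      using frac_eq_zero_iff[OF S] frac_in_loc_carrier[OF 1] by (auto simp: loc_carrier_iff)
  qed
  ultimately show ?thesis
    by blast
qed

lemma ann_loc_mod:
  assumes S: "mult_closed S"
  shows "ann (loc_mod S) = loc_kernel S"
proof (rule set_eqI)
  have 1: "1 \<in> S" using mult_closed_one[OF S] .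
  fix r
  have "r \<in> loc_kernel S" if "r \<in> ann (loc_mod S)"
  proof -
    have "loc_smul S r (frac S 1 1) = frac S 0 1"
      using that frac_in_loc_carrier[OF 1] by (simp add: ann_def loc_mod_simps)
    then show ?thesis
      using loc_smul_frac[OF S 1, of r 1] frac_eq_zero_iff[OF S 1] by simp
  qed
  moreover have "loc_smul S r X = frac S 0 1"
    if r: "r \<in> loc_kernel S" and X: "X \<in> loc_carrier S" for X
  proof -
    obtain a s where s: "s \<in> S" and "X = frac S a s"
      using X unfolding loc_carrier_iff by blast
    moreover have "a * r \<in> loc_kernel S"
      using loc_kernel_ideal[OF S] r unfolding is_ideal_def by blast
    ultimately show ?thesis
      using loc_smul_frac[OF S s] frac_eq_zero_iff[OF S s] by (simp add: mult.commute)
  qed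
  ultimately show "r \<in> ann (loc_mod S) \<longleftrightarrow> r \<in> loc_kernel S"
    by (auto simp: ann_def loc_mod_simps)
qed

lemma prime_loc_kernel_if_prime_module:
  assumes S: "mult_closed S" and prime: "prime_module (loc_mod S)"
  shows "prime_ideal (loc_kernel S)"
proof -
  have 1: "1 \<in> S" using mult_closed_one[OF S] .
  have "b \<in> loc_kernel S" if ab: "a * b \<in> loc_kernel S" and a: "a \<notin> loc_kernel S" for a b
  proof -
    have "inj_on (loc_smul S a) (loc_carrier S)"
      using prime a ann_loc_mod[OF S] by (auto simp: prime_module_def ann_def loc_mod_simps)
    moreover have "loc_smul S a (frac S b 1) = loc_smul S a (frac S 0 1)"
      using ab loc_smul_frac[OF S 1] frac_eq_zero_iff[OF S 1] by simp
    ultimately have "frac S b 1 = frac S 0 1"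
      using frac_in_loc_carrier[OF 1] by (meson inj_onD)
    then show ?thesis
      using frac_eq_zero_iff[OF S 1] by simp
  qed
  moreover have "1 \<notin> loc_kernel S"
    using prime loc_carrier_nontrivial_iff[OF S] by (simp add: prime_module_def loc_mod_simps)
  ultimately show ?thesis
    using prime_loc_kernel_iff[OF S] by blast
qed

lemma loc_domain_iff:
  assumes S: "mult_closed S"
  shows "loc_domain S \<longleftrightarrow> prime_ideal (loc_kernel S)"
proof -
  have 1: "1 \<in> S" using mult_closed_one[OF S] .
  have "(\<forall>X\<in>loc_carrier S. \<forall>Y\<in>loc_carrier S.
          loc_mult S X Y = frac S 0 1 \<longrightarrow> X = frac S 0 1 \<or> Y = frac S 0 1)
      \<longleftrightarrow> (\<forall>a b. a * b \<in> loc_kernel S \<longrightarrow> a \<in> loc_kernel S \<or> b \<in> loc_kernel S)"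
  proof
    assume domain: "\<forall>X\<in>loc_carrier S. \<forall>Y\<in>loc_carrier S.
              loc_mult S X Y = frac S 0 1 \<longrightarrow> X = frac S 0 1 \<or> Y = frac S 0 1"
    show "\<forall>a b. a * b \<in> loc_kernel S \<longrightarrow> a \<in> loc_kernel S \<or> b \<in> loc_kernel S"
    proof (intro allI impI)
      fix a b assume "a * b \<in> loc_kernel S"
      then have "loc_mult S (frac S a 1) (frac S b 1) = frac S 0 1"
        using loc_mult_frac[OF S 1 1] frac_eq_zero_iff[OF S 1] by simp
      then have "frac S a 1 = frac S 0 1 \<or> frac S b 1 = frac S 0 1"
        using domain frac_in_loc_carrier[OF 1] by blast
      then show "a \<in> loc_kernel S \<or> b \<in> loc_kernel S"
        using frac_eq_zero_iff[OF S 1] by simp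
    qed
  next
    assume prime: "\<forall>a b. a * b \<in> loc_kernel S \<longrightarrow> a \<in> loc_kernel S \<or> b \<in> loc_kernel S"
    show "\<forall>X\<in>loc_carrier S. \<forall>Y\<in>loc_carrier S.
            loc_mult S X Y = frac S 0 1 \<longrightarrow> X = frac S 0 1 \<or> Y = frac S 0 1"
    proof (intro ballI impI)
      fix X Y assume "X \<in> loc_carrier S" "Y \<in> loc_carrier S"
        and XY: "loc_mult S X Y = frac S 0 1"
      then obtain a s b v where s: "s \<in> S" "X = frac S a s" and v: "v \<in> S" "Y = frac S b v"
        unfolding loc_carrier_iff by blast
      have "a * b \<in> loc_kernel S"
        using XY loc_mult_frac[OF S s(1) v(1)] frac_eq_zero_iff[OF S mult_closed_mult[OF S s(1) v(1)]]
        unfolding s v by simp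
      then show "X = frac S 0 1 \<or> Y = frac S 0 1"
        using prime frac_eq_zero_iff[OF S s(1)] frac_eq_zero_iff[OF S v(1)] unfolding s v by blast
    qed
  qed
  then show ?thesis
    unfolding loc_domain_def prime_loc_kernel_iff[OF S] frac_eq_zero_iff[OF S 1] by blast
qed

text \<open>Module records carry no axioms, so closure under scalars and the action of 0 are
  assumed explicitly.\<close>

lemma prime_module_of_mono:
  fixes M :: "('r::zero, 'm) rmod" and N :: "('r, 'n) rmod"
  assumes N: "prime_module N" and f: "mod_mono M N f" and nontrivial: "mcarrier M \<noteq> {mzero M}"
    and closed: "\<And>r x. x \<in> mcarrier M \<Longrightarrow> msmul M r x \<in> mcarrier M"
    and M0: "\<And>x. x \<in> mcarrier M \<Longrightarrow> msmul M 0 x = mzero M"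
    and N0: "\<And>y. y \<in> mcarrier N \<Longrightarrow> msmul N 0 y = mzero N"
  shows "prime_module M"
proof -
  have f_in: "\<And>x. x \<in> mcarrier M \<Longrightarrow> f x \<in> mcarrier N"
    and f_smul: "\<And>r x. x \<in> mcarrier M \<Longrightarrow> f (msmul M r x) = msmul N r (f x)"
    and f_inj: "inj_on f (mcarrier M)"
    using f unfolding mod_mono_def mod_hom_def by auto
  have "(\<forall>x\<in>mcarrier M. msmul M r x = mzero M) \<or> inj_on (msmul M r) (mcarrier M)" for r
  proof (cases "\<forall>y\<in>mcarrier N. msmul N r y = mzero N")
    case True
    have "msmul M r x = mzero M" if x: "x \<in> mcarrier M" for x
    proof -
      have "f (msmul M r x) = f (msmul M 0 x)"
        using True f_in[OF x] f_smul[OF x] N0 by simp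
      then show ?thesis
        using f_inj closed[OF x] M0[OF x] by (metis inj_onD)
    qed
    then show ?thesis by blast
  next
    case False
    then have "inj_on (msmul N r) (mcarrier N)"
      using N unfolding prime_module_def by blast
    then have "inj_on (msmul M r) (mcarrier M)"
      using f_inj f_in f_smul by (smt (verit) inj_on_def)
    then show ?thesis by blast
  qed
  then show ?thesis
    using nontrivial unfolding prime_module_def by blast
qed

lemma mult_closed_compl: "prime_ideal p \<Longrightarrow> mult_closed (- p)"
  unfolding mult_closed_def using prime_idealD(4,5) by blast

lemma prime_ideal_cross_trans:
  assumes p: "prime_ideal p" and v: "v \<notin> p"
    and "a * v - b * s \<in> p" "b * w - c * v \<in> p"
  shows "a * w - c * s \<in> p"
proof -
  have "v * (a * w - c * s) = w * (a * v - b * s) + s * (b * w - c * v)"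
    by (simp add: algebra_simps)
  then have "v * (a * w - c * s) \<in> p"
    using assms prime_idealD(2,3)[OF p] by metis
  then show ?thesis
    using prime_idealD(5)[OF p] v by blast
qed

lemma prime_ideal_cross_sym:
  assumes "prime_ideal p" "a * v - b * s \<in> p"
  shows "b * s - a * v \<in> p"
  using prime_idealD(3)[OF assms(1) assms(2), of "-1"] by simp

definition kappa_frac :: "'a::comm_ring_1 set \<Rightarrow> 'a \<Rightarrow> 'a \<Rightarrow> ('a \<times> 'a) set set" where
  "kappa_frac p a s = coset (loc_mod (- p)) (ext_max p) (frac (- p) a s)"

lemma mem_kappa_frac_iff:
  assumes p: "prime_ideal p" and s: "s \<notin> p"
  shows "y \<in> kappa_frac p a s \<longleftrightarrow> (\<exists>e w. w \<notin> p \<and> y = frac (- p) e w \<and> a * w - e * s \<in> p)"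
proof
  have S: "mult_closed (- p)" using mult_closed_compl[OF p] .
  assume "y \<in> kappa_frac p a s"
  then obtain c u where cu: "c \<in> p" "u \<notin> p" "y = loc_add (- p) (frac (- p) a s) (frac (- p) c u)"
    unfolding kappa_frac_def coset_def ext_max_def loc_mod_simps by auto
  have "y = frac (- p) (a * u + c * s) (s * u)"
    using cu loc_add_frac[OF S] s by simp
  moreover have "s * u \<notin> p"
    using mult_closed_mult[OF S] s cu(2) by simp
  moreover have "a * (s * u) - (a * u + c * s) * s = - (s * s) * c"
    by (simp add: algebra_simps)
  then have "a * (s * u) - (a * u + c * s) * s \<in> p"
    using prime_idealD(3)[OF p cu(1)] by metis
  ultimately show "\<exists>e w. w \<notin> p \<and> y = frac (- p) e w \<and> a * w - e * s \<in> p"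
    by blast
next
  have S: "mult_closed (- p)" using mult_closed_compl[OF p] .
  assume "\<exists>e w. w \<notin> p \<and> y = frac (- p) e w \<and> a * w - e * s \<in> p"
  then obtain e w where w: "w \<notin> p" and y: "y = frac (- p) e w" and ew: "a * w - e * s \<in> p"
    by blast
  have sw: "s * w \<in> - p"
    using mult_closed_mult[OF S] s w by simp
  have "frac (- p) (e * s - a * w) (s * w) \<in> ext_max p"
    unfolding ext_max_def using prime_ideal_cross_sym[OF p ew] sw by blast
  moreover have "loc_add (- p) (frac (- p) a s) (frac (- p) (e * s - a * w) (s * w)) = y"
  proof -
    have "1 * ((a * (s * w) + (e * s - a * w) * s) * w - e * (s * (s * w))) = 0"
      by (simp add: algebra_simps)
    then show ?thesis
      unfolding y using s w sw mult_closed_mult[OF S] mult_closed_one[OF S]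
      by (simp add: loc_add_frac[OF S] frac_eq_iff[OF S]) blast
  qed
  ultimately show "y \<in> kappa_frac p a s"
    unfolding kappa_frac_def coset_def loc_mod_simps by blast
qed

lemma kappa_frac_eq_iff:
  assumes p: "prime_ideal p" and s: "s \<notin> p" and v: "v \<notin> p"
  shows "kappa_frac p a s = kappa_frac p b v \<longleftrightarrow> a * v - b * s \<in> p"
proof
  assume eq: "kappa_frac p a s = kappa_frac p b v"
  have "frac (- p) a s \<in> kappa_frac p a s"
    unfolding mem_kappa_frac_iff[OF p s] using s prime_idealD(1)[OF p] by force
  then obtain e w where w: "w \<notin> p" and fr: "frac (- p) a s = frac (- p) e w"
    and bw: "b * w - e * v \<in> p"
    unfolding eq mem_kappa_frac_iff[OF p v] by blast
  obtain t where "t \<notin> p" "t * (a * w - e * s) = 0"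
    using fr s w by (auto simp: frac_eq_iff[OF mult_closed_compl[OF p]])
  then have "a * w - e * s \<in> p"
    using prime_idealD(1,5)[OF p] by metis
  then show "a * v - b * s \<in> p"
    using prime_ideal_cross_trans[OF p w] prime_ideal_cross_sym[OF p bw] by blast
next
  assume ab: "a * v - b * s \<in> p"
  have "a * w - e * s \<in> p \<longleftrightarrow> b * w - e * v \<in> p" for e w
    using prime_ideal_cross_trans[OF p s prime_ideal_cross_sym[OF p ab]]
      prime_ideal_cross_trans[OF p v ab] by blast
  then show "kappa_frac p a s = kappa_frac p b v"
    by (auto simp: mem_kappa_frac_iff[OF p s] mem_kappa_frac_iff[OF p v])
qed

lemma quot_mod_smul_coset:
  assumes "x \<in> mcarrier M"
    and "\<And>y. y \<in> mcarrier M \<Longrightarrow> coset M N y = coset M N x \<Longrightarrow>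
           coset M N (msmul M r y) = coset M N (msmul M r x)"
  shows "msmul (quot_mod M N) r (coset M N x) = coset M N (msmul M r x)"
proof -
  have "msmul (quot_mod M N) r (coset M N x) =
      (SOME C. \<exists>y\<in>mcarrier M. coset M N x = coset M N y \<and> C = coset M N (msmul M r y))"
    by (simp add: quot_mod_def)
  also have "\<dots> = coset M N (msmul M r x)"
    using assms by (intro some_equality) (blast, metis)
  finally show ?thesis .
qed

lemma quot_mod_add_coset:
  assumes "x \<in> mcarrier M" "y \<in> mcarrier M"
    and "\<And>x' y'. x' \<in> mcarrier M \<Longrightarrow> y' \<in> mcarrier M \<Longrightarrow>
           coset M N x' = coset M N x \<Longrightarrow> coset M N y' = coset M N y \<Longrightarrow>
           coset M N (madd M x' y') = coset M N (madd M x y)"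
  shows "madd (quot_mod M N) (coset M N x) (coset M N y) = coset M N (madd M x y)"
proof -
  have "madd (quot_mod M N) (coset M N x) (coset M N y) =
      (SOME C. \<exists>x'\<in>mcarrier M. \<exists>y'\<in>mcarrier M. coset M N x = coset M N x' \<and>
                 coset M N y = coset M N y' \<and> C = coset M N (madd M x' y'))"
    by (simp add: quot_mod_def)
  also have "\<dots> = coset M N (madd M x y)"
    using assms by (intro some_equality) (blast, metis)
  finally show ?thesis .
qed

lemma kappa_carrier: "mcarrier (kappa p) = {kappa_frac p a s | a s. s \<notin> p}"
proof -
  have "mcarrier (kappa p) = coset (loc_mod (- p)) (ext_max p) ` loc_carrier (- p)"
    by (simp add: kappa_def quot_mod_def loc_mod_simps)
  then show ?thesis
    unfolding kappa_frac_def loc_carrier_def by blast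
qed

lemma kappa_zero: "mzero (kappa p) = kappa_frac p 0 1"
  unfolding kappa_def quot_mod_def kappa_frac_def by (simp add: loc_mod_simps)

lemma kappa_smul:
  assumes p: "prime_ideal p" and s: "s \<notin> p"
  shows "msmul (kappa p) r (kappa_frac p a s) = kappa_frac p (r * a) s"
proof -
  have S: "mult_closed (- p)" using mult_closed_compl[OF p] .
  have s': "s \<in> - p" using s by simp
  let ?C = "coset (loc_mod (- p)) (ext_max p)"
  have "msmul (kappa p) r (kappa_frac p a s) = ?C (loc_smul (- p) r (frac (- p) a s))"
    unfolding kappa_def kappa_frac_def loc_mod_simps(4)[symmetric]
  proof (rule quot_mod_smul_coset)
    show "frac (- p) a s \<in> mcarrier (loc_mod (- p))"
      using frac_in_loc_carrier[OF s'] by (simp add: loc_mod_simps)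
    fix y assume "y \<in> mcarrier (loc_mod (- p))" and eq: "?C y = ?C (frac (- p) a s)"
    then obtain e w where w: "w \<notin> p" and y: "y = frac (- p) e w"
      by (auto simp: loc_mod_simps loc_carrier_iff)
    have "e * s - a * w \<in> p"
      using eq kappa_frac_eq_iff[OF p w s] by (simp add: y kappa_frac_def)
    moreover have "(r * e) * s - (r * a) * w = r * (e * s - a * w)"
      by (simp add: algebra_simps)
    ultimately have "kappa_frac p (r * e) w = kappa_frac p (r * a) s"
      using kappa_frac_eq_iff[OF p w s] prime_idealD(3)[OF p] by simp
    then show "?C (msmul (loc_mod (- p)) r y) = ?C (msmul (loc_mod (- p)) r (frac (- p) a s))"
      using w s by (simp add: y loc_mod_simps loc_smul_frac[OF S] kappa_frac_def)
  qed
  also have "\<dots> = kappa_frac p (r * a) s"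
    by (simp add: loc_smul_frac[OF S s'] kappa_frac_def)
  finally show ?thesis .
qed

lemma kappa_add:
  assumes p: "prime_ideal p" and s: "s \<notin> p" and v: "v \<notin> p"
  shows "madd (kappa p) (kappa_frac p a s) (kappa_frac p b v) = kappa_frac p (a * v + b * s) (s * v)"
proof -
  have S: "mult_closed (- p)" using mult_closed_compl[OF p] .
  have s': "s \<in> - p" and v': "v \<in> - p" using s v by simp_all
  have sv: "s * v \<notin> p"
    using mult_closed_mult[OF S s' v'] by simp
  let ?C = "coset (loc_mod (- p)) (ext_max p)"
  have "madd (kappa p) (kappa_frac p a s) (kappa_frac p b v) =
      ?C (loc_add (- p) (frac (- p) a s) (frac (- p) b v))"
    unfolding kappa_def kappa_frac_def loc_mod_simps(3)[symmetric]
  proof (rule quot_mod_add_coset)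
    show "frac (- p) a s \<in> mcarrier (loc_mod (- p))" "frac (- p) b v \<in> mcarrier (loc_mod (- p))"
      using frac_in_loc_carrier[OF s'] frac_in_loc_carrier[OF v'] by (simp_all add: loc_mod_simps)
    fix x y assume "x \<in> mcarrier (loc_mod (- p))" "y \<in> mcarrier (loc_mod (- p))"
      and eq: "?C x = ?C (frac (- p) a s)" "?C y = ?C (frac (- p) b v)"
    then obtain a' s'' b' v'' where s'': "s'' \<notin> p" and x: "x = frac (- p) a' s''"
      and v'': "v'' \<notin> p" and y: "y = frac (- p) b' v''"
      by (auto simp: loc_mod_simps loc_carrier_iff)
    have "a' * s - a * s'' \<in> p" "b' * v - b * v'' \<in> p"
      using eq kappa_frac_eq_iff[OF p s'' s] kappa_frac_eq_iff[OF p v'' v]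
      by (simp_all add: x y kappa_frac_def)
    moreover have "(a' * v'' + b' * s'') * (s * v) - (a * v + b * s) * (s'' * v'')
        = (v * v'') * (a' * s - a * s'') + (s * s'') * (b' * v - b * v'')"
      by (simp add: algebra_simps)
    ultimately have "(a' * v'' + b' * s'') * (s * v) - (a * v + b * s) * (s'' * v'') \<in> p"
      using prime_idealD(2,3)[OF p] by simp
    moreover have "s'' * v'' \<notin> p"
      using mult_closed_mult[OF S] s'' v'' by simp
    ultimately have "kappa_frac p (a' * v'' + b' * s'') (s'' * v'') = kappa_frac p (a * v + b * s) (s * v)"
      using kappa_frac_eq_iff[OF p _ sv] by simp
    then show "?C (madd (loc_mod (- p)) x y) =
        ?C (madd (loc_mod (- p)) (frac (- p) a s) (frac (- p) b v))"
      using s v s'' v'' by (simp add: x y loc_mod_simps loc_add_frac[OF S] kappa_frac_def)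
  qed
  also have "\<dots> = kappa_frac p (a * v + b * s) (s * v)"
    by (simp add: loc_add_frac[OF S s' v'] kappa_frac_def)
  finally show ?thesis .
qed

lemma kappa_smul_eq_zero:
  assumes p: "prime_ideal p" and r: "r \<in> p" and y: "y \<in> mcarrier (kappa p)"
  shows "msmul (kappa p) r y = mzero (kappa p)"
proof -
  obtain a s where s: "s \<notin> p" and "y = kappa_frac p a s"
    using y unfolding kappa_carrier by blast
  moreover have "r * a \<in> p"
    using prime_idealD(3)[OF p r, of a] by (simp add: mult.commute)
  ultimately show ?thesis
    using kappa_smul[OF p s] kappa_frac_eq_iff[OF p s] prime_idealD(4)[OF p]
    by (simp add: kappa_zero)
qed

lemma prime_module_kappa:
  assumes p: "prime_ideal p"
  shows "prime_module (kappa p)"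
proof -
  have 1: "(1::'a) \<notin> p" using prime_idealD(4)[OF p] .
  have "inj_on (msmul (kappa p) r) (mcarrier (kappa p))" if r: "r \<notin> p" for r
  proof (rule inj_onI)
    fix y z assume "y \<in> mcarrier (kappa p)" "z \<in> mcarrier (kappa p)"
      and eq: "msmul (kappa p) r y = msmul (kappa p) r z"
    then obtain a s b v where s: "s \<notin> p" and v: "v \<notin> p"
      and y: "y = kappa_frac p a s" and z: "z = kappa_frac p b v"
      unfolding kappa_carrier by blast
    have "r * a * v - r * b * s = r * (a * v - b * s)"
      by (simp add: algebra_simps)
    then have "r * (a * v - b * s) \<in> p"
      using eq kappa_smul[OF p] kappa_frac_eq_iff[OF p] s v unfolding y z by metis
    then show "y = z"
      using prime_idealD(5)[OF p] r kappa_frac_eq_iff[OF p s v] unfolding y z by blast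
  qed
  moreover have "kappa_frac p 1 1 \<noteq> kappa_frac p 0 1"
    using kappa_frac_eq_iff[OF p 1 1] 1 by simp
  then have "mcarrier (kappa p) \<noteq> {mzero (kappa p)}"
    using 1 by (auto simp: kappa_carrier kappa_zero)
  ultimately show ?thesis
    unfolding prime_module_def using kappa_smul_eq_zero[OF p] by blast
qed

lemma loc_kernel_disjoint:
  assumes S: "mult_closed S" and 1: "1 \<notin> loc_kernel S" and s: "s \<in> S"
  shows "s \<notin> loc_kernel S"
proof
  assume "s \<in> loc_kernel S"
  then obtain t where "t \<in> S" "t * s = 0"
    unfolding loc_kernel_def by blast
  then have "0 \<in> S"
    using mult_closed_mult[OF S _ s] by metis
  then show False
    using 1 unfolding loc_kernel_def by force
qed

definition loc_to_kappa :: "'a::comm_ring_1 set \<Rightarrow> ('a \<times> 'a) set \<Rightarrow> ('a \<times> 'a) set set" where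
  "loc_to_kappa S X = (SOME Y. \<exists>a s. s \<in> S \<and> X = frac S a s \<and> Y = kappa_frac (loc_kernel S) a s)"

lemma loc_to_kappa_frac:
  assumes S: "mult_closed S" and K: "prime_ideal (loc_kernel S)" and s: "s \<in> S"
  shows "loc_to_kappa S (frac S a s) = kappa_frac (loc_kernel S) a s"
proof -
  have SK: "\<And>s. s \<in> S \<Longrightarrow> s \<notin> loc_kernel S"
    using loc_kernel_disjoint[OF S prime_idealD(4)[OF K]] by blast
  have "Y = kappa_frac (loc_kernel S) a s"
    if "\<exists>a' s'. s' \<in> S \<and> frac S a s = frac S a' s' \<and> Y = kappa_frac (loc_kernel S) a' s'" for Y
  proof -
    from that obtain a' s' where s': "s' \<in> S" and "frac S a s = frac S a' s'"
      and Y: "Y = kappa_frac (loc_kernel S) a' s'"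
      by blast
    then have "a * s' - a' * s \<in> loc_kernel S"
      using frac_eq_iff_loc_kernel[OF S s s'] by simp
    then show ?thesis
      using kappa_frac_eq_iff[OF K SK[OF s] SK[OF s']] Y by metis
  qed
  then show ?thesis
    unfolding loc_to_kappa_def using s by (intro some_equality) blast+
qed

lemma loc_to_kappa_mono:
  assumes S: "mult_closed S" and K: "prime_ideal (loc_kernel S)"
  shows "mod_mono (loc_mod S) (kappa (loc_kernel S)) (loc_to_kappa S)"
proof -
  have SK: "\<And>s. s \<in> S \<Longrightarrow> s \<notin> loc_kernel S"
    using loc_kernel_disjoint[OF S prime_idealD(4)[OF K]] by blast
  note frac_simps = loc_to_kappa_frac[OF S K] loc_add_frac[OF S] loc_smul_frac[OF S]
    kappa_add[OF K SK SK] kappa_smul[OF K SK] mult_closed_mult[OF S]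
  show ?thesis
    unfolding mod_mono_def mod_hom_def loc_mod_simps
  proof (intro conjI ballI allI inj_onI)
    show "loc_to_kappa S X \<in> mcarrier (kappa (loc_kernel S))" if "X \<in> loc_carrier S" for X
      using that SK by (auto simp: loc_carrier_iff kappa_carrier frac_simps) blast
    show "loc_to_kappa S (loc_add S X Y) =
          madd (kappa (loc_kernel S)) (loc_to_kappa S X) (loc_to_kappa S Y)"
      if "X \<in> loc_carrier S" "Y \<in> loc_carrier S" for X Y
      using that by (auto simp: loc_carrier_iff frac_simps)
    show "loc_to_kappa S (loc_smul S r X) = msmul (kappa (loc_kernel S)) r (loc_to_kappa S X)"
      if "X \<in> loc_carrier S" for r X
      using that by (auto simp: loc_carrier_iff frac_simps)
    show "X = Y" if X: "X \<in> loc_carrier S" and Y: "Y \<in> loc_carrier S"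
      and eq: "loc_to_kappa S X = loc_to_kappa S Y" for X Y
    proof -
      obtain a s b v where s: "s \<in> S" "X = frac S a s" and v: "v \<in> S" "Y = frac S b v"
        using X Y unfolding loc_carrier_iff by blast
      then have "a * v - b * s \<in> loc_kernel S"
        using eq kappa_frac_eq_iff[OF K SK SK] by (simp add: frac_simps)
      then show ?thesis
        using frac_eq_iff_loc_kernel[OF S s(1) v(1)] s v by simp
    qed
  qed
qed

theorem lemma1p6:
  fixes S :: "'a::comm_ring_1 set"
  assumes "noetherian_ring TYPE('a)"
    and "local_ring TYPE('a)"
    and "mult_closed S"
  shows "(prime_module (loc_mod S) \<longleftrightarrow> prime_ideal (ann (loc_mod S)))
       \<and> (prime_ideal (ann (loc_mod S)) \<longleftrightarrow> loc_domain S)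
       \<and> (loc_domain S \<longleftrightarrow>
            (\<exists>p. prime_ideal p \<and> mcarrier (loc_mod S) \<noteq> {mzero (loc_mod S)} \<and>
                 (\<exists>f. mod_mono (loc_mod S) (kappa p) f)))"
proof -
  have S: "mult_closed S" by fact
  let ?K = "loc_kernel S"
  let ?iv = "\<exists>p. prime_ideal p \<and> mcarrier (loc_mod S) \<noteq> {mzero (loc_mod S)} \<and>
                 (\<exists>f. mod_mono (loc_mod S) (kappa p) f)"
  have "prime_ideal ?K \<Longrightarrow> ?iv"
    using loc_to_kappa_mono[OF S] loc_carrier_nontrivial_iff[OF S] prime_idealD(4)
    by (fastforce simp: loc_mod_simps)
  moreover have "prime_module (loc_mod S)" if ?iv
  proof -
    obtain p f where p: "prime_ideal p" and f: "mod_mono (loc_mod S) (kappa p) f"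
      and nontrivial: "mcarrier (loc_mod S) \<noteq> {mzero (loc_mod S)}"
      using \<open>?iv\<close> by blast
    have "0 \<in> ann (loc_mod S)"
      using ann_loc_mod[OF S] loc_kernel_ideal[OF S] by (simp add: is_ideal_def)
    then show ?thesis
      using loc_smul_closed[OF S] kappa_smul_eq_zero[OF p prime_idealD(1)[OF p]]
      by (intro prime_module_of_mono[OF prime_module_kappa[OF p] f nontrivial])
         (auto simp: ann_def loc_mod_simps)
  qed
  moreover have "prime_module (loc_mod S) \<Longrightarrow> prime_ideal ?K"
    using prime_loc_kernel_if_prime_module[OF S] .
  ultimately show ?thesis
    unfolding ann_loc_mod[OF S] loc_domain_iff[OF S] by argo
qed

end
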